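(* Let $x_*$ be a feasible point of problem $(\mathcal{P})$, and let $\mathcal{D}(x_* )=\partial F(x_* )+\mathcal{N}(x_* )+N_A(x_* )$. Then: (1) a Lagrange multiplier of $(\mathcal{P})$ at $x_*$ exists if and only if $0\in\mathcal{D}(x_* )$; (2) the condition $$\max_{\omega\in W(x_* )}\langle\nabla_xf(x_*,\omega),h\rangle>0\quad\text{for all }h\in T_A(x_* )\setminus\{0\}\text{ with }DG(x_* )h\in T_K(G(x_* ))$$ holds if and only if $0\in\operatorname{int}\mathcal{D}(x_* )$.
   Context: Standing setting: $A\subseteq\mathbb{R}^d$ nonempty closed convex; $Y$ real Banach space with dual $Y^*$ and pairing $\langle\cdot,\cdot\rangle$ (also the inner product on $\mathbb{R}^d$); $K\subset Y$ nonempty closed convex cone; $W$ compact Hausdorff space; $f:\mathbb{R}^d\times W\to\mathbb{R}$ differentiable in $x$ for each $\omega$ with $f,\nabla_xf$ jointly continuous; $G:\mathbb{R}^d\to Y$ continuously Fréchet differentiable. $F(x)=\max_{\omega}f(x,\omega)$, $W(x)=\{\omega:f(x,\omega)=F(x)\}$; problem $(\mathcal{P})$: minimise $F(x)$ s.t. $G(x)\in K$, $x\in A$. Contingent cone $T_C(x)$: set of $h$ with $\alpha_n\downarrow0$, $h_n\to h$, $x+\alpha_nh_n\in C$. $K^*=\{y^*:\langle y^*,y\rangle\le0\ \forall y\in K\}$. $N_A(x)=\{z\in\mathbb{R}^d:\langle z,v\rangle\le0\ \forall v\in T_A(x)\}$. $\partial F(x)=\operatorname{co}\{\nabla_xf(x,\omega):\omega\in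 W(x)\}$. For linear $T:\mathbb{R}^d\to Y$, $[T]^*y^*\in\mathbb{R}^d$ is defined by $\langle[T]^*y^*,h\rangle=\langle y^*,Th\rangle$. $\mathcal{N}(x)=\{[DG(x)]^*\lambda:\lambda\in K^*,\ \langle\lambda,G(x)\rangle=0\}$. Lagrangian $L(x,\lambda)=F(x)+\langle\lambda,G(x)\rangle$; $\lambda_*$ is a Lagrange multiplier at feasible $x_*$ if $\lambda_*\in K^*$, $\langle\lambda_*,G(x_* )\rangle=0$ and $[L(\cdot,\lambda_* )]'(x_*,h)\ge0$ for all $h\in T_A(x_* )$. *)

theory Defs
  imports "HOL-Analysis.Analysis"
begin

definition contingent_cone :: "'v::real_normed_vector set \<Rightarrow> 'v \<Rightarrow> 'v set" where
  "contingent_cone C x = {h. \<exists>\<alpha> hs. (\<forall>n. \<alpha> n > 0) \<and> decseq \<alpha> \<and> \<alpha> \<longlonglongrightarrow> 0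
      \<and> hs \<longlonglongrightarrow> h \<and> (\<forall>n. x + \<alpha> n *\<^sub>R hs n \<in> C)}"

definition polar_cone :: "'b::real_normed_vector set \<Rightarrow> ('b \<Rightarrow>\<^sub>L real) set" where
  "polar_cone K = {y. \<forall>k\<in>K. blinfun_apply y k \<le> 0}"

definition normal_cone :: "'a::euclidean_space set \<Rightarrow> 'a \<Rightarrow> 'a set" where
  "normal_cone A x = {z. \<forall>v\<in>contingent_cone A x. z \<bullet> v \<le> 0}"

definition maxfun :: "('a \<Rightarrow> 'w \<Rightarrow> real) \<Rightarrow> 'a \<Rightarrow> real" where
  "maxfun f x = (SUP \<omega>. f x \<omega>)"

definition active_set :: "('a \<Rightarrow> 'w \<Rightarrow> real) \<Rightarrow> 'a \<Rightarrow> 'w set" where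
  "active_set f x = {\<omega>. f x \<omega> = maxfun f x}"

text \<open>Subdifferential co{grad_x f(x,\<omega>) : \<omega> \<in> W(x)}; gf is the gradient in x.\<close>
definition subdiff :: "('a \<Rightarrow> 'w \<Rightarrow> real) \<Rightarrow> ('a \<Rightarrow> 'w \<Rightarrow> 'a::euclidean_space) \<Rightarrow> 'a \<Rightarrow> 'a set" where
  "subdiff f gf x = convex hull {gf x \<omega> | \<omega>. \<omega> \<in> active_set f x}"

definition adj :: "('a::euclidean_space \<Rightarrow> 'b::real_normed_vector) \<Rightarrow> ('b \<Rightarrow>\<^sub>L real) \<Rightarrow> 'a" where
  "adj T y = (THE z. \<forall>h. z \<bullet> h = blinfun_apply y (T h))"

definition constr_cone :: "('a::euclidean_space \<Rightarrow> 'b::real_normed_vector) \<Rightarrow> ('a \<Rightarrow> 'a \<Rightarrow> 'b)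
    \<Rightarrow> 'b set \<Rightarrow> 'a \<Rightarrow> 'a set" where
  "constr_cone G DG K x = {adj (DG x) l | l. l \<in> polar_cone K \<and> blinfun_apply l (G x) = 0}"

definition Dset :: "('a \<Rightarrow> 'w \<Rightarrow> real) \<Rightarrow> ('a \<Rightarrow> 'w \<Rightarrow> 'a::euclidean_space)
    \<Rightarrow> ('a \<Rightarrow> 'b::real_normed_vector) \<Rightarrow> ('a \<Rightarrow> 'a \<Rightarrow> 'b) \<Rightarrow> 'b set \<Rightarrow> 'a set \<Rightarrow> 'a \<Rightarrow> 'a set" where
  "Dset f gf G DG K A x = {u + v + w | u v w. u \<in> subdiff f gf x \<and> v \<in> constr_cone G DG K x
      \<and> w \<in> normal_cone A x}"

definition has_dir_deriv :: "('a::real_normed_vector \<Rightarrow> real) \<Rightarrow> 'a \<Rightarrow> 'a \<Rightarrow> real \<Rightarrow> bool" where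
  "has_dir_deriv \<phi> x h d \<longleftrightarrow> ((\<lambda>t. (\<phi> (x + t *\<^sub>R h) - \<phi> x) / t) \<longlongrightarrow> d) (at_right 0)"

definition lagrangian :: "('a \<Rightarrow> 'w \<Rightarrow> real) \<Rightarrow> ('a \<Rightarrow> 'b::real_normed_vector) \<Rightarrow> ('b \<Rightarrow>\<^sub>L real) \<Rightarrow> 'a \<Rightarrow> real" where
  "lagrangian f G l x = maxfun f x + blinfun_apply l (G x)"

definition is_lagrange_multiplier :: "('a::euclidean_space \<Rightarrow> 'w \<Rightarrow> real) \<Rightarrow> ('a \<Rightarrow> 'b::real_normed_vector)
    \<Rightarrow> 'b set \<Rightarrow> 'a set \<Rightarrow> 'a \<Rightarrow> ('b \<Rightarrow>\<^sub>L real) \<Rightarrow> bool" where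
  "is_lagrange_multiplier f G K A x l \<longleftrightarrow> l \<in> polar_cone K \<and> blinfun_apply l (G x) = 0 \<and>
     (\<forall>h\<in>contingent_cone A x. \<exists>d. has_dir_deriv (lagrangian f G l) x h d \<and> d \<ge> 0)"

end

theory Submission
  imports Defs
begin

text \<open>By Danskin's theorem the directional derivative of F at x in direction h is
  sigma(h) = max over the active set of the slopes of f(-, omega) in direction h, i.e. the
  support function of the subdifferential. Hence a multiplier lambda exists iff
  sigma(h) + lambda(DG(x) h) >= 0 for all h in T_A(x), and separating 0 from the closed convex
  set subdiff + [DG(x)]^* lambda + N_A(x) shows that this means 0 in D(x). For (2), 0 is an
  interior point of the convex set D(x) iff every h ~= 0 has some d in D(x) with <d, h> > 0.
  Since N_A(x) is the polar of T_A(x), and the multipliers vanishing at G(x) form the polar of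
  T_K(G(x)) (bipolar theorem in the Banach space Y, via Hahn-Banach), the supremum of <d, h>
  over D(x) is sigma(h) when h is in T_A(x) with DG(x) h in T_K(G(x)), and infinite otherwise.\<close>

section \<open>Hahn-Banach extension\<close>

definition sublinear :: "('b::real_vector \<Rightarrow> real) \<Rightarrow> bool" where
  "sublinear p \<longleftrightarrow> (\<forall>y z. p (y + z) \<le> p y + p z) \<and> (\<forall>t y. t > 0 \<longrightarrow> p (t *\<^sub>R y) = t * p y)"

text \<open>A dominated subspace encodes the graph of a linear functional below p on the subspace
  fst ` H; domination forces the graph property.\<close>
definition dominated_subspace :: "('b::real_vector \<Rightarrow> real) \<Rightarrow> ('b \<times> real) set \<Rightarrow> bool" where
  "dominated_subspace p H \<longleftrightarrow> subspace H \<and> (\<forall>(y, a) \<in> H. a \<le> p y)"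

lemma sublinear_zero:
  assumes "sublinear p"
  shows "p 0 = 0"
proof -
  have "p (2 *\<^sub>R 0) = 2 * p 0"
    using assms unfolding sublinear_def by (meson zero_less_numeral)
  then show ?thesis by simp
qed

lemma sublinear_neg_le: "sublinear p \<Longrightarrow> - p (- y) \<le> p y"
proof -
  assume "sublinear p"
  then have "p (y + - y) \<le> p y + p (- y)" and "p 0 = 0"
    using sublinear_zero unfolding sublinear_def by blast+
  then show ?thesis by simp
qed

lemma sublinear_scaleR_ge:
  assumes p: "sublinear p"
  shows "t * p y \<le> p (t *\<^sub>R y)"
proof -
  have hom: "\<And>r y. r > 0 \<Longrightarrow> p (r *\<^sub>R y) = r * p y"
    using p unfolding sublinear_def by blast
  consider "t > 0" | "t = 0" | "t < 0" by linarith
  then show ?thesis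
  proof cases
    case 3
    have "p (- (t *\<^sub>R y)) = - t * p y" using hom[of "- t" y] 3 by simp
    then show ?thesis using sublinear_neg_le[OF p, of "t *\<^sub>R y"] by simp
  qed (use hom sublinear_zero[OF p] in auto)
qed

lemma dominated_subspace_graph:
  assumes p: "sublinear p" and H: "dominated_subspace p H" and "(y, a) \<in> H" "(y, b) \<in> H"
  shows "a = b"
proof -
  have sH: "subspace H" and dom: "\<And>y a. (y, a) \<in> H \<Longrightarrow> a \<le> p y"
    using H unfolding dominated_subspace_def by auto
  have "(y, a) - (y, b) \<in> H" "(y, b) - (y, a) \<in> H"
    using subspace_diff[OF sH] assms(3,4) by blast+
  then have "(0, a - b) \<in> H" "(0, b - a) \<in> H" by simp_all
  then have "a - b \<le> p 0" "b - a \<le> p 0" using dom by blast+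
  then show ?thesis using sublinear_zero[OF p] by linarith
qed

lemma subspace_Union_chain:
  assumes "\<C> \<noteq> {}" "\<And>S. S \<in> \<C> \<Longrightarrow> subspace S"
    and chain: "\<And>S T. S \<in> \<C> \<Longrightarrow> T \<in> \<C> \<Longrightarrow> S \<subseteq> T \<or> T \<subseteq> S"
  shows "subspace (\<Union>\<C>)"
  unfolding subspace_def
proof (intro conjI ballI allI)
  show "0 \<in> \<Union>\<C>" using assms(1,2) subspace_0 by blast
next
  fix x y assume "x \<in> \<Union>\<C>" "y \<in> \<Union>\<C>"
  then obtain S T where "S \<in> \<C>" "T \<in> \<C>" "x \<in> S" "y \<in> T" by blast
  with chain[of S T] assms(2) show "x + y \<in> \<Union>\<C>" by (meson UnionI subsetD subspace_add)
next
  fix c :: real and x assume "x \<in> \<Union>\<C>"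
  then show "c *\<^sub>R x \<in> \<Union>\<C>" using assms(2) subspace_mul by blast
qed

lemma dominated_subspace_extension_bound:
  assumes p: "sublinear p" and H: "dominated_subspace p H"
    and lower: "\<And>s a. (s, a) \<in> H \<Longrightarrow> a - p (s - y0) \<le> c"
    and upper: "\<And>s a. (s, a) \<in> H \<Longrightarrow> c \<le> p (s + y0) - a"
    and sa: "(s, a) \<in> H"
  shows "a + t * c \<le> p (s + t *\<^sub>R y0)"
proof -
  have sH: "subspace H" and hom: "\<And>r y. r > 0 \<Longrightarrow> p (r *\<^sub>R y) = r * p y"
    using H p unfolding dominated_subspace_def sublinear_def by auto
  have scaled: "((1 / r) *\<^sub>R s, a / r) \<in> H" for r
    using subspace_mul[OF sH sa, of "1 / r"] by simp
  consider "t = 0" | "t > 0" | "t < 0" by linarith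
  then show ?thesis
  proof cases
    case 1
    then show ?thesis using H sa unfolding dominated_subspace_def by auto
  next
    case 2
    have "c \<le> p ((1 / t) *\<^sub>R (s + t *\<^sub>R y0)) - a / t"
      using upper[OF scaled[of t]] 2 by (simp add: scaleR_add_right)
    also have "\<dots> = (p (s + t *\<^sub>R y0) - a) / t"
      using hom 2 by (simp add: diff_divide_distrib)
    finally show ?thesis using 2 by (simp add: le_divide_eq algebra_simps)
  next
    case 3
    have "a / (- t) - p ((1 / (- t)) *\<^sub>R (s + t *\<^sub>R y0)) \<le> c"
      using lower[OF scaled[of "- t"]] 3 by (simp add: scaleR_add_right)
    moreover have "p ((1 / (- t)) *\<^sub>R (s + t *\<^sub>R y0)) = p (s + t *\<^sub>R y0) / (- t)"
      using hom[of "1 / (- t)" "s + t *\<^sub>R y0"] 3 by simp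
    ultimately have "(a - p (s + t *\<^sub>R y0)) / (- t) \<le> c"
      by (simp add: diff_divide_distrib)
    then have "a - p (s + t *\<^sub>R y0) \<le> c * (- t)"
      using pos_divide_le_eq[of "- t"] 3 by simp
    then show ?thesis by (simp add: algebra_simps)
  qed
qed

text \<open>The value c at the new direction y0 is squeezed between the bounds that subadditivity
  of p provides on both sides.\<close>
lemma dominated_subspace_extend:
  assumes p: "sublinear p" and H: "dominated_subspace p H"
  obtains H' where "dominated_subspace p H'" "H \<subseteq> H'" "y0 \<in> fst ` H'"
proof -
  have sH: "subspace H" and dom: "\<And>y a. (y, a) \<in> H \<Longrightarrow> a \<le> p y"
    using H unfolding dominated_subspace_def by auto
  have sep: "a - p (s - y0) \<le> p (s' + y0) - a'" if "(s, a) \<in> H" "(s', a') \<in> H" for s a s' a'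
  proof -
    have "a + a' \<le> p ((s - y0) + (s' + y0))"
      using dom subspace_add[OF sH that] by simp
    also have "\<dots> \<le> p (s - y0) + p (s' + y0)"
      using p unfolding sublinear_def by blast
    finally show ?thesis by simp
  qed
  define c where "c = (SUP (s, a) \<in> H. a - p (s - y0))"
  have H0: "(0, 0) \<in> H" using subspace_0[OF sH] by (simp add: zero_prod_def)
  have "bdd_above ((\<lambda>(s, a). a - p (s - y0)) ` H)"
    using sep[OF _ H0] by (intro bdd_aboveI2) auto
  then have lower: "a - p (s - y0) \<le> c" if "(s, a) \<in> H" for s a
    unfolding c_def using cSUP_upper[OF that] by fastforce
  have upper: "c \<le> p (s + y0) - a" if "(s, a) \<in> H" for s a
    unfolding c_def by (rule cSUP_least) (use H0 sep[OF _ that] in auto)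
  define H' where "H' = span (insert (y0, c) H)"
  have "b \<le> p z" if zb: "(z, b) \<in> H'" for z b
  proof -
    obtain t where "(z, b) - t *\<^sub>R (y0, c) \<in> span H"
      using zb unfolding H'_def span_insert by blast
    then have "(z, b) - t *\<^sub>R (y0, c) \<in> H"
      using span_eq_iff[THEN iffD2, OF sH] by simp
    then have "(z - t *\<^sub>R y0, b - t * c) \<in> H" by simp
    from dominated_subspace_extension_bound[OF p H lower upper this, of t] show ?thesis by simp
  qed
  then have "dominated_subspace p H'"
    unfolding dominated_subspace_def H'_def by (auto simp: subspace_span)
  moreover have "H \<subseteq> H'" "(y0, c) \<in> H'"
    unfolding H'_def using span_superset[of "insert (y0, c) H"] by blast+
  ultimately show ?thesis using that by force
qed

lemma dominated_subspace_span_point: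
  assumes p: "sublinear p"
  shows "dominated_subspace p (span {(v, p v)})"
proof -
  have "a \<le> p y" if ya: "(y, a) \<in> span {(v, p v)}" for y a
  proof -
    obtain t where "(y, a) = t *\<^sub>R (v, p v)"
      using ya unfolding span_singleton by blast
    then show ?thesis using sublinear_scaleR_ge[OF p, of t v] by simp
  qed
  then show ?thesis
    unfolding dominated_subspace_def by (simp add: case_prod_beta)
qed

lemma maximal_dominated_subspace:
  assumes p: "sublinear p"
  obtains M where "dominated_subspace p M" "(v, p v) \<in> M" "\<And>y. \<exists>a. (y, a) \<in> M"
proof -
  define \<A> where "\<A> = {H. dominated_subspace p H \<and> (v, p v) \<in> H}"
  have "span {(v, p v)} \<in> \<A>"
    unfolding \<A>_def using dominated_subspace_span_point[OF p] by (simp add: span_base)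
  then have "\<A> \<noteq> {}" by blast
  moreover have "\<Union>\<C> \<in> \<A>" if ne: "\<C> \<noteq> {}" and chain: "subset.chain \<A> \<C>" for \<C>
  proof -
    have \<C>: "\<C> \<subseteq> \<A>" "\<And>S T. S \<in> \<C> \<Longrightarrow> T \<in> \<C> \<Longrightarrow> S \<subseteq> T \<or> T \<subseteq> S"
      using chain unfolding subset.chain_def by auto
    then have "subspace (\<Union>\<C>)"
      using subspace_Union_chain[OF ne] unfolding \<A>_def dominated_subspace_def by blast
    moreover have "\<forall>(y, a) \<in> \<Union>\<C>. a \<le> p y" "(v, p v) \<in> \<Union>\<C>"
      using \<C>(1) ne unfolding \<A>_def dominated_subspace_def by blast+
    ultimately show ?thesis unfolding \<A>_def dominated_subspace_def by blast
  qed
  ultimately obtain M where "M \<in> \<A>" and max: "\<And>H. H \<in> \<A> \<Longrightarrow> M \<subseteq> H \<Longrightarrow> H = M"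
    using subset_Zorn_nonempty[of \<A>] by blast
  then have M: "dominated_subspace p M" and vM: "(v, p v) \<in> M"
    unfolding \<A>_def by auto
  have "\<exists>a. (y, a) \<in> M" for y
  proof -
    obtain H where "dominated_subspace p H" "M \<subseteq> H" "y \<in> fst ` H"
      using dominated_subspace_extend[OF p M] by blast
    moreover from this have "H = M" using max vM unfolding \<A>_def by blast
    ultimately show ?thesis by force
  qed
  then show ?thesis using that M vM by blast
qed

lemma dominated_subspace_total_graph:
  assumes p: "sublinear p" and M: "dominated_subspace p M" and total: "\<And>y. \<exists>a. (y, a) \<in> M"
  obtains l where "linear l" "\<And>y. (y, l y) \<in> M"
proof
  define l where "l y = (THE a. (y, a) \<in> M)" for y
  have l_eq: "l y = a" if "(y, a) \<in> M" for y a
    unfolding l_def using that dominated_subspace_graph[OF p M] by blast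
  show l_mem: "(y, l y) \<in> M" for y
    using total[of y] l_eq by blast
  have sM: "subspace M" using M unfolding dominated_subspace_def by blast
  show "linear l"
  proof (rule linearI)
    show "l (y + z) = l y + l z" for y z
      using subspace_add[OF sM l_mem l_mem] l_eq by simp
    show "l (r *\<^sub>R y) = r *\<^sub>R l y" for r y
      using subspace_mul[OF sM l_mem] l_eq by simp
  qed
qed

theorem hahn_banach_sublinear:
  assumes p: "sublinear p"
  obtains l where "linear l" "\<And>y. l y \<le> p y" "l v = p v"
proof -
  obtain M where M: "dominated_subspace p M" "(v, p v) \<in> M" "\<And>y. \<exists>a. (y, a) \<in> M"
    using maximal_dominated_subspace[OF p] by blast
  then obtain l where l: "linear l" "\<And>y. (y, l y) \<in> M"
    using dominated_subspace_total_graph[OF p] by blast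
  have "l y \<le> p y" for y
    using M(1) l(2) unfolding dominated_subspace_def by blast
  moreover have "l v = p v"
    using dominated_subspace_graph[OF p M(1) l(2) M(2)] .
  ultimately show ?thesis using that l(1) by blast
qed

section \<open>Separating a point from a closed convex cone\<close>

lemma infdist_greatest:
  assumes "C \<noteq> {}" "\<And>c. c \<in> C \<Longrightarrow> a \<le> dist x c"
  shows "a \<le> infdist x C"
  unfolding infdist_notempty[OF assms(1)] by (rule cINF_greatest[OF assms])

lemma infdist_add_le:
  fixes C :: "'a::real_normed_vector set"
  assumes "C \<noteq> {}" and add: "\<And>c c'. c \<in> C \<Longrightarrow> c' \<in> C \<Longrightarrow> c + c' \<in> C"
  shows "infdist (y + w) C \<le> infdist y C + infdist w C"
proof -
  have shift: "infdist (w + c') C \<le> infdist w C" if "c' \<in> C" for c'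
  proof (rule infdist_greatest[OF assms(1)])
    fix c assume "c \<in> C"
    then have "infdist (w + c') C \<le> dist (w + c') (c + c')"
      using add that by (intro infdist_le) auto
    also have "dist (w + c') (c + c') = dist w c"
      by (simp add: dist_norm)
    finally show "infdist (w + c') C \<le> dist w c" .
  qed
  have "infdist (y + w) C - infdist w C \<le> dist y c'" if "c' \<in> C" for c'
    using infdist_triangle[of "y + w" C "w + c'"] shift[OF that]
    by (simp add: dist_norm algebra_simps)
  then have "infdist (y + w) C - infdist w C \<le> infdist y C"
    by (rule infdist_greatest[OF assms(1)])
  then show ?thesis by simp
qed

lemma infdist_cone_scaleR_le:
  fixes C :: "'a::real_normed_vector set"
  assumes "cone C" "C \<noteq> {}" "t > 0"
  shows "infdist (t *\<^sub>R y) C \<le> t * infdist y C"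
proof -
  have "infdist (t *\<^sub>R y) C / t \<le> dist y c" if "c \<in> C" for c
  proof -
    have "infdist (t *\<^sub>R y) C \<le> dist (t *\<^sub>R y) (t *\<^sub>R c)"
      using assms that unfolding cone_def by (intro infdist_le) auto
    also have "\<dots> = norm (t *\<^sub>R (y - c))"
      by (simp add: dist_norm scaleR_diff_right)
    also have "\<dots> = t * dist y c"
      using assms(3) by (simp add: dist_norm)
    finally show ?thesis using assms(3) by (simp add: divide_le_eq mult.commute)
  qed
  then have "infdist (t *\<^sub>R y) C / t \<le> infdist y C"
    by (rule infdist_greatest[OF assms(2)])
  then show ?thesis using assms(3) by (simp add: divide_le_eq mult.commute)
qed

lemma sublinear_infdist_convex_cone:
  fixes C :: "'a::real_normed_vector set"
  assumes "convex C" "cone C" "C \<noteq> {}"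
  shows "sublinear (\<lambda>y. infdist y C)"
  unfolding sublinear_def
proof (intro conjI allI impI)
  show "infdist (y + z) C \<le> infdist y C + infdist z C" for y z
    using assms convex_cone[of C] by (intro infdist_add_le) auto
  fix t :: real and y assume t: "t > 0"
  have "infdist y C = infdist ((1 / t) *\<^sub>R (t *\<^sub>R y)) C" using t by simp
  also have "\<dots> \<le> (1 / t) * infdist (t *\<^sub>R y) C"
    using assms t by (intro infdist_cone_scaleR_le) auto
  finally have "t * infdist y C \<le> infdist (t *\<^sub>R y) C"
    using t by (simp add: field_simps)
  then show "infdist (t *\<^sub>R y) C = t * infdist y C"
    using infdist_cone_scaleR_le[OF assms(2,3) t, of y] by linarith
qed

lemma closed_convex_cone_separation:
  fixes C :: "'b::real_normed_vector set"
  assumes "convex C" "cone C" "closed C" "C \<noteq> {}" "v \<notin> C"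
  obtains l :: "'b \<Rightarrow>\<^sub>L real" where "\<And>c. c \<in> C \<Longrightarrow> l c \<le> 0" "l v > 0"
proof -
  obtain l where l: "linear l" "\<And>y. l y \<le> infdist y C" "l v = infdist v C"
    using hahn_banach_sublinear[OF sublinear_infdist_convex_cone[OF assms(1,2,4)]] by blast
  have "0 \<in> C" using assms(2,4) by (simp add: cone_contains_0)
  then have "infdist y C \<le> norm y" for y
    using infdist_le[of 0 C y] by simp
  then have "\<bar>l y\<bar> \<le> norm y" for y
    using l(2)[of y] l(2)[of "- y"] linear_neg[OF l(1), of y] by (smt (verit) norm_minus_cancel)
  then have "bounded_linear l"
    using l(1) by (intro bounded_linear_intro[where K=1]) (simp_all add: linear_add linear_scale)
  moreover have "l c \<le> 0" if "c \<in> C" for c using l(2)[of c] that by simp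
  moreover have "l v > 0"
    using l(3) infdist_pos_not_in_closed[OF assms(3,4,5)] by simp
  ultimately show ?thesis
    using that[of "Blinfun l"] by (simp add: bounded_linear_Blinfun_apply)
qed

section \<open>Contingent cones of convex sets and their polars\<close>

lemma mem_cone_hull_translate:
  "h \<in> cone hull ((\<lambda>a. a - x) ` S) \<longleftrightarrow> (\<exists>t a. t \<ge> 0 \<and> a \<in> S \<and> h = t *\<^sub>R (a - x))"
  unfolding cone_hull_expl by blast

lemma contingent_cone_subset_closure_cone_hull:
  "contingent_cone S x \<subseteq> closure (cone hull ((\<lambda>a. a - x) ` S))"
proof
  fix h assume "h \<in> contingent_cone S x"
  then obtain \<alpha> hs where pos: "\<And>n. \<alpha> n > 0" and hs: "hs \<longlonglongrightarrow> h"
    and inS: "\<And>n. x + \<alpha> n *\<^sub>R hs n \<in> S"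
    unfolding contingent_cone_def by blast
  have "hs n = (1 / \<alpha> n) *\<^sub>R ((x + \<alpha> n *\<^sub>R hs n) - x)" for n
    using pos[of n] by simp
  then have "hs n \<in> cone hull ((\<lambda>a. a - x) ` S)" for n
    unfolding mem_cone_hull_translate using pos[of n] inS[of n]
    by (intro exI[of _ "1 / \<alpha> n"] exI[of _ "x + \<alpha> n *\<^sub>R hs n"]) auto
  then show "h \<in> closure (cone hull ((\<lambda>a. a - x) ` S))"
    unfolding closure_sequential using hs by blast
qed

text \<open>The definition of contingent_cone requires decreasing step lengths; the bound on the
  products keeps x + alpha n hs n on the segment from x to a point of the set.\<close>
lemma decseq_null_scaling:
  fixes t :: "nat \<Rightarrow> real"
  assumes t: "\<And>n. t n \<ge> 0"
  obtains \<alpha> where "\<And>n. \<alpha> n > 0" "decseq \<alpha>" "\<alpha> \<longlonglongrightarrow> 0" "\<And>n. \<alpha> n * t n \<le> 1"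
proof
  define s where "s n = real (Suc n) + (\<Sum>k\<le>n. t k)" for n
  have "t n \<le> (\<Sum>k\<le>n. t k)" "0 \<le> (\<Sum>k\<le>n. t k)" for n
    using t by (auto intro: member_le_sum sum_nonneg)
  note sum = this
  have s: "real (Suc n) \<le> s n" "t n \<le> s n" "s n \<le> s (Suc n)" for n
    unfolding s_def using sum[of n] t[of "Suc n"] by auto
  have s_pos: "s n > 0" for n
    using s(1)[of n] by linarith
  define \<alpha> where "\<alpha> n = 1 / s n" for n
  show "\<alpha> n > 0" for n
    unfolding \<alpha>_def using s_pos by simp
  show "decseq \<alpha>"
    unfolding \<alpha>_def by (rule decseq_SucI, rule frac_le) (use s(3) s_pos in auto)
  show "\<alpha> n * t n \<le> 1" for n
    unfolding \<alpha>_def using s(2)[of n] s_pos[of n] by simp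
  have "0 \<le> \<alpha> n" for n
    unfolding \<alpha>_def using s_pos[of n] by simp
  moreover have "\<alpha> n \<le> 1 / real (Suc n)" for n
    unfolding \<alpha>_def by (rule frac_le) (use s(1) s_pos in auto)
  moreover have "(\<lambda>n. 1 / real (Suc n)) \<longlonglongrightarrow> 0"
    using LIMSEQ_Suc[OF lim_inverse_n'] by simp
  ultimately show "\<alpha> \<longlonglongrightarrow> 0"
    using real_tendsto_sandwich[of "\<lambda>_. 0" \<alpha> sequentially "\<lambda>n. 1 / real (Suc n)" 0]
    by (simp add: always_eventually)
qed

lemma closure_cone_hull_subset_contingent_cone:
  assumes S: "convex S" "x \<in> S"
  shows "closure (cone hull ((\<lambda>a. a - x) ` S)) \<subseteq> contingent_cone S x"
proof
  fix h assume "h \<in> closure (cone hull ((\<lambda>a. a - x) ` S))"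
  then obtain hs where "\<And>n. hs n \<in> cone hull ((\<lambda>a. a - x) ` S)" and lim: "hs \<longlonglongrightarrow> h"
    unfolding closure_sequential by blast
  then have "\<forall>n. \<exists>t a. t \<ge> 0 \<and> a \<in> S \<and> hs n = t *\<^sub>R (a - x)"
    unfolding mem_cone_hull_translate by blast
  then obtain t a where t: "\<And>n. t n \<ge> 0" and a: "\<And>n. a n \<in> S"
    and hs: "\<And>n. hs n = t n *\<^sub>R (a n - x)"
    by metis
  obtain \<alpha> where \<alpha>: "\<And>n. \<alpha> n > 0" "decseq \<alpha>" "\<alpha> \<longlonglongrightarrow> 0" "\<And>n. \<alpha> n * t n \<le> 1"
    using decseq_null_scaling[of t] t by metis
  have inS: "x + \<alpha> n *\<^sub>R hs n \<in> S" for n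
  proof -
    have "x + \<alpha> n *\<^sub>R hs n = (1 - \<alpha> n * t n) *\<^sub>R x + (\<alpha> n * t n) *\<^sub>R a n"
      unfolding hs by (simp add: algebra_simps)
    then show ?thesis
      using \<alpha>(1,4)[of n] t[of n] convexD_alt[OF S(1) S(2) a[of n], of "\<alpha> n * t n"] by simp
  qed
  show "h \<in> contingent_cone S x"
    unfolding contingent_cone_def
    by (intro CollectI exI[of _ \<alpha>] exI[of _ hs]) (simp add: \<alpha>(1-3) lim inS)
qed

lemma contingent_cone_convex:
  assumes "convex S" "x \<in> S"
  shows "contingent_cone S x = closure (cone hull ((\<lambda>a. a - x) ` S))"
  using contingent_cone_subset_closure_cone_hull closure_cone_hull_subset_contingent_cone[OF assms]
  by blast

lemma diff_mem_contingent_cone: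
  assumes "convex S" "x \<in> S" "a \<in> S"
  shows "a - x \<in> contingent_cone S x"
proof -
  have "a - x \<in> cone hull ((\<lambda>a. a - x) ` S)"
    unfolding mem_cone_hull_translate using assms(3) by (intro exI[of _ 1]) auto
  then show ?thesis
    unfolding contingent_cone_convex[OF assms(1,2)] using closure_subset by blast
qed

lemma contingent_cone_separation:
  fixes S :: "'b::real_normed_vector set"
  assumes "convex S" "x \<in> S" "v \<notin> contingent_cone S x"
  obtains l :: "'b \<Rightarrow>\<^sub>L real" where "\<And>u. u \<in> contingent_cone S x \<Longrightarrow> l u \<le> 0" "l v > 0"
proof -
  let ?C = "closure (cone hull ((\<lambda>a. a - x) ` S))"
  have eq: "contingent_cone S x = ?C"
    by (rule contingent_cone_convex[OF assms(1,2)])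
  have "convex ?C"
    by (intro convex_closure convex_cone_hull convex_translation_subtract assms(1))
  moreover have "cone ?C"
    by (intro cone_closure cone_cone_hull)
  moreover have "?C \<noteq> {}"
    using assms(2) closure_subset cone_hull_contains_0[of "(\<lambda>a. a - x) ` S"] by blast
  moreover have "v \<notin> ?C"
    using assms(3) eq by simp
  ultimately obtain l :: "'b \<Rightarrow>\<^sub>L real" where "\<And>c. c \<in> ?C \<Longrightarrow> l c \<le> 0" "l v > 0"
    using closed_convex_cone_separation[OF _ _ closed_closure] by metis
  then show ?thesis
    using that unfolding eq by blast
qed

lemma polar_cone_nonpos_on_contingent_cone:
  assumes l: "l \<in> polar_cone K" "l g = 0" and v: "v \<in> contingent_cone K g"
  shows "l v \<le> 0"
proof -
  obtain \<alpha> vs where pos: "\<And>n. \<alpha> n > 0" and vs: "vs \<longlonglongrightarrow> v"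
    and inK: "\<And>n. g + \<alpha> n *\<^sub>R vs n \<in> K"
    using v unfolding contingent_cone_def by blast
  have "l (g + \<alpha> n *\<^sub>R vs n) \<le> 0" for n
    using l(1) inK[of n] unfolding polar_cone_def by blast
  then have "\<alpha> n * l (vs n) \<le> 0" for n
    using l(2) by (simp add: blinfun.add_right blinfun.scaleR_right)
  then have "l (vs n) \<le> 0" for n
    using pos[of n] by (simp add: mult_le_0_iff) (meson not_less)
  moreover have "(\<lambda>n. l (vs n)) \<longlonglongrightarrow> l v"
    using vs by (intro blinfun.tendsto tendsto_const)
  ultimately show ?thesis
    by (intro LIMSEQ_le_const2) auto
qed

lemma mem_contingent_cone_iff_polar:
  fixes K :: "'b::real_normed_vector set"
  assumes K: "convex K" "cone K" "g \<in> K"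
  shows "v \<in> contingent_cone K g \<longleftrightarrow> (\<forall>l\<in>polar_cone K. l g = 0 \<longrightarrow> l v \<le> 0)"
proof (intro iffI ballI impI)
  show "l v \<le> 0" if "v \<in> contingent_cone K g" "l \<in> polar_cone K" "l g = 0" for l
    using polar_cone_nonpos_on_contingent_cone that by blast
next
  assume polar: "\<forall>l\<in>polar_cone K. l g = 0 \<longrightarrow> l v \<le> 0"
  show "v \<in> contingent_cone K g"
  proof (rule ccontr)
    assume "v \<notin> contingent_cone K g"
    then obtain l :: "'b \<Rightarrow>\<^sub>L real"
      where l: "\<And>u. u \<in> contingent_cone K g \<Longrightarrow> l u \<le> 0" "l v > 0"
      by (rule contingent_cone_separation[OF K(1,3)]) auto
    have "l k \<le> 0" if "k \<in> K" for k
    proof -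
      have "k + g \<in> K" using K convex_cone[of K] that by blast
      then show ?thesis using l(1)[OF diff_mem_contingent_cone[OF K(1,3) \<open>k + g \<in> K\<close>]] by simp
    qed
    then have "l \<in> polar_cone K" unfolding polar_cone_def by blast
    moreover have "0 \<in> K" using K(2,3) cone_contains_0 by blast
    then have "l (- g) \<le> 0"
      using l(1)[OF diff_mem_contingent_cone[OF K(1,3) \<open>0 \<in> K\<close>]] by simp
    then have "l g = 0"
      using \<open>l \<in> polar_cone K\<close> K(3) unfolding polar_cone_def
      by (simp add: blinfun.minus_right) (meson antisym)
    ultimately show False using polar l(2) by auto
  qed
qed

lemma inner_adj:
  fixes T :: "'a::euclidean_space \<Rightarrow> 'b::real_normed_vector"
  assumes T: "linear T"
  shows "adj T y \<bullet> h = y (T h)"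
proof -
  define z where "z = (\<Sum>b\<in>Basis. y (T b) *\<^sub>R b)"
  have lin: "linear (\<lambda>h. y (T h))"
    using linear_compose[OF T bounded_linear.linear[OF blinfun.bounded_linear_right]]
    by (simp add: comp_def)
  have z: "z \<bullet> h = y (T h)" for h
  proof -
    have "z \<bullet> h = (\<Sum>b\<in>Basis. (h \<bullet> b) * y (T b))"
      unfolding z_def inner_sum_left by (simp add: inner_commute mult.commute)
    also have "\<dots> = y (T (\<Sum>b\<in>Basis. (h \<bullet> b) *\<^sub>R b))"
      by (simp add: linear_sum[OF lin] linear_scale[OF lin])
    finally show ?thesis by (simp add: euclidean_representation)
  qed
  have "adj T y = z"
    unfolding adj_def
  proof (rule the_equality)
    show "\<And>z'. \<forall>h. z' \<bullet> h = y (T h) \<Longrightarrow> z' = z"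
      using z vector_eq_rdot by metis
  qed (use z in blast)
  then show ?thesis using z by simp
qed

lemma linear_adj:
  fixes T :: "'a::euclidean_space \<Rightarrow> 'b::real_normed_vector"
  assumes T: "linear T"
  shows "linear (adj T)"
  by (rule linearI; subst vector_eq_rdot[symmetric])
    (simp_all add: inner_adj[OF T] inner_add_left blinfun.add_left blinfun.scaleR_left)

lemma normal_cone_eq_Inter:
  "normal_cone A x = (\<Inter>v\<in>contingent_cone A x. {z. v \<bullet> z \<le> 0})"
  unfolding normal_cone_def by (auto simp: inner_commute)

lemma closed_normal_cone: "closed (normal_cone A x)"
  unfolding normal_cone_eq_Inter by (intro closed_INT ballI closed_halfspace_le)

lemma convex_cone_normal_cone: "convex_cone (normal_cone A x)"
  unfolding normal_cone_eq_Inter by (intro convex_cone_Inter) (auto intro: convex_cone_halfspace_le)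

lemma mem_contingent_cone_iff_normal_cone:
  fixes A :: "'a::euclidean_space set"
  assumes A: "convex A" "x \<in> A"
  shows "h \<in> contingent_cone A x \<longleftrightarrow> (\<forall>w\<in>normal_cone A x. w \<bullet> h \<le> 0)"
proof (intro iffI ballI)
  show "w \<bullet> h \<le> 0" if "h \<in> contingent_cone A x" "w \<in> normal_cone A x" for w
    using that unfolding normal_cone_def by blast
next
  assume normal: "\<forall>w\<in>normal_cone A x. w \<bullet> h \<le> 0"
  show "h \<in> contingent_cone A x"
  proof (rule ccontr)
    assume "h \<notin> contingent_cone A x"
    then obtain l :: "'a \<Rightarrow>\<^sub>L real"
      where l: "\<And>u. u \<in> contingent_cone A x \<Longrightarrow> l u \<le> 0" "l h > 0"
      by (rule contingent_cone_separation[OF A]) auto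
    have adj: "adj (\<lambda>u. u) l \<bullet> u = l u" for u
      using inner_adj[OF linear_id[unfolded id_def]] .
    then have "adj (\<lambda>u. u) l \<in> normal_cone A x"
      using l(1) unfolding normal_cone_def by simp
    then show False
      using normal adj[of h] l(2) by fastforce
  qed
qed

section \<open>Convex sets in Euclidean space\<close>

lemma exists_pos_scale_gt:
  fixes c d k :: real
  assumes "k > 0"
  shows "\<exists>t>0. c < d + t * k"
proof (intro exI conjI)
  show "(\<bar>c\<bar> + \<bar>d\<bar> + 1) / k > 0" using assms by simp
  show "c < d + (\<bar>c\<bar> + \<bar>d\<bar> + 1) / k * k" using assms by simp
qed

lemma zero_notin_interior_convex_halfspace:
  fixes D :: "'a::euclidean_space set"
  assumes D: "convex D" "0 \<notin> interior D"
  obtains a where "a \<noteq> 0" "\<And>y. y \<in> D \<Longrightarrow> 0 \<le> a \<bullet> y"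
proof (cases "interior D = {}")
  case True
  then obtain a b where a: "a \<noteq> 0" "D \<subseteq> {y. a \<bullet> y = b}"
    using empty_interior_subset_hyperplane[OF D(1)] by blast
  show ?thesis
  proof (cases "b \<ge> 0")
    case True
    show ?thesis by (rule that[of a]) (use a True in auto)
  next
    case False
    show ?thesis by (rule that[of "- a"]) (use a False in auto)
  qed
next
  case False
  obtain a where a: "a \<noteq> 0" "\<forall>y\<in>interior D. 0 \<le> a \<bullet> y"
    using separating_hyperplane_set_0[OF convex_interior[OF D(1)] D(2)] by blast
  then have "closure (interior D) \<subseteq> {y. 0 \<le> a \<bullet> y}"
    by (intro closure_minimal) (auto simp: closed_halfspace_ge)
  then have "D \<subseteq> {y. 0 \<le> a \<bullet> y}"
    using convex_closure_interior[OF D(1) False] closure_subset by blast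
  then show ?thesis using that a(1) by blast
qed

lemma zero_mem_interior_convex_iff:
  fixes D :: "'a::euclidean_space set"
  assumes D: "convex D"
  shows "0 \<in> interior D \<longleftrightarrow> (\<forall>h. h \<noteq> 0 \<longrightarrow> (\<exists>d\<in>D. 0 < d \<bullet> h))"
proof (intro iffI allI impI)
  fix h :: 'a assume "0 \<in> interior D" "h \<noteq> 0"
  then obtain e where e: "e > 0" "ball 0 e \<subseteq> D"
    using mem_interior by blast
  define d where "d = (e / (2 * norm h)) *\<^sub>R h"
  have "d \<in> D" using e \<open>h \<noteq> 0\<close> unfolding d_def by (auto simp: subset_iff)
  moreover have "d \<bullet> h = e / 2 * norm h"
    using \<open>h \<noteq> 0\<close> unfolding d_def by (simp add: dot_square_norm power2_eq_square)
  moreover have "0 < e / 2 * norm h"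
    using e(1) \<open>h \<noteq> 0\<close> by simp
  ultimately show "\<exists>d\<in>D. 0 < d \<bullet> h"
    by (intro bexI[of _ d]) linarith+
next
  assume pos: "\<forall>h. h \<noteq> 0 \<longrightarrow> (\<exists>d\<in>D. 0 < d \<bullet> h)"
  show "0 \<in> interior D"
  proof (rule ccontr)
    assume "0 \<notin> interior D"
    then obtain a where "a \<noteq> 0" "\<And>y. y \<in> D \<Longrightarrow> 0 \<le> a \<bullet> y"
      using zero_notin_interior_convex_halfspace[OF D] by blast
    then show False
      using pos[rule_format, of "- a"] by (force simp: inner_commute)
  qed
qed

lemma zero_mem_compact_plus_convex_cone:
  fixes C N :: "'a::euclidean_space set"
  assumes C: "compact C" "convex C" and N: "closed N" "convex_cone N"
    and dual: "\<And>h. (\<forall>w\<in>N. w \<bullet> h \<le> 0) \<Longrightarrow> \<exists>u\<in>C. 0 \<le> u \<bullet> h"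
  shows "\<exists>u\<in>C. \<exists>w\<in>N. u + w = 0"
proof (rule ccontr)
  define S where "S = (\<Union>u\<in>C. \<Union>w\<in>N. {u + w})"
  assume "\<not> (\<exists>u\<in>C. \<exists>w\<in>N. u + w = 0)"
  then have "0 \<notin> S" unfolding S_def by auto
  moreover have "convex S" "closed S"
    unfolding S_def using C N by (auto intro: convex_sums compact_closed_sums simp: convex_cone_def)
  ultimately obtain a b where ab: "0 < b" "\<And>s. s \<in> S \<Longrightarrow> b < a \<bullet> s"
    using separating_hyperplane_closed_point[of S 0] by auto
  obtain u0 where u0: "u0 \<in> C" using dual[of 0] by auto
  have "0 \<le> a \<bullet> w" if "w \<in> N" for w
  proof (rule ccontr)
    assume "\<not> 0 \<le> a \<bullet> w"
    then obtain t where "t > 0" "- b < - (a \<bullet> u0) + t * - (a \<bullet> w)"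
      using exists_pos_scale_gt[of "- (a \<bullet> w)"] by auto
    moreover have "t *\<^sub>R w \<in> N"
      using convex_cone_scaleR[OF N(2)] that \<open>t > 0\<close> by simp
    then have "u0 + t *\<^sub>R w \<in> S"
      unfolding S_def using u0 by blast
    ultimately show False using ab(2) by (fastforce simp: inner_add_right)
  qed
  then have "\<forall>w\<in>N. w \<bullet> - a \<le> 0"
    by (simp add: inner_commute)
  then obtain u where "u \<in> C" "0 \<le> u \<bullet> - a"
    using dual by blast
  moreover have "u + 0 \<in> S"
    unfolding S_def using \<open>u \<in> C\<close> convex_cone_contains_0[OF N(2)] by blast
  ultimately show False using ab by (force simp: inner_commute)
qed

section \<open>Danskin's theorem\<close>

lemma compact_param_equicontinuous_at:
  fixes g :: "'a::metric_space \<Rightarrow> 'w::topological_space \<Rightarrow> 'c::metric_space"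
  assumes W: "compact (UNIV :: 'w set)" and g: "continuous_on UNIV (\<lambda>p. g (fst p) (snd p))"
    and e: "e > 0"
  obtains d where "d > 0" "\<And>y \<omega>. dist y x < d \<Longrightarrow> dist (g y \<omega>) (g x \<omega>) < e"
proof -
  define U where "U = {p. dist (g (fst p) (snd p)) (g x (snd p)) < e}"
  have "continuous_on UNIV (\<lambda>p. g x (snd p))"
    using continuous_on_compose2[OF g, of UNIV "\<lambda>p. (x, snd p)"]
    by (simp add: continuous_on_Pair continuous_on_snd)
  then have U: "open U"
    unfolding U_def using g by (intro open_Collect_less continuous_on_dist continuous_on_const)
  moreover have "{x} \<times> UNIV \<subseteq> U"
    unfolding U_def using e by auto
  ultimately have "\<exists>X. x \<in> X \<and> open X \<and> X \<times> UNIV \<subseteq> U"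
    by (rule Elementary_Topology.tube_lemma[OF W])
  then obtain X where "x \<in> X" "open X" "X \<times> UNIV \<subseteq> U"
    by blast
  then obtain d where "d > 0" "ball x d \<subseteq> X"
    using open_contains_ball by blast
  have "dist (g y \<omega>) (g x \<omega>) < e" if "dist y x < d" for y \<omega>
  proof -
    have "(y, \<omega>) \<in> X \<times> UNIV"
      using that \<open>ball x d \<subseteq> X\<close> by (auto simp: dist_commute)
    then have "(y, \<omega>) \<in> U" using \<open>X \<times> UNIV \<subseteq> U\<close> by blast
    then show ?thesis unfolding U_def by simp
  qed
  then show ?thesis using that \<open>d > 0\<close> by blast
qed

lemma compact_UNIV_le_Sup:
  fixes g :: "'w::topological_space \<Rightarrow> real"
  assumes "compact (UNIV :: 'w set)" "continuous_on UNIV g"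
  shows "g \<omega> \<le> Sup (range g)"
  using compact_imp_bounded[OF compact_continuous_image[OF assms(2,1)]]
  by (intro cSUP_upper bounded_imp_bdd_above) auto

lemma compact_UNIV_Sup_attained:
  fixes g :: "'w::topological_space \<Rightarrow> real"
  assumes "compact (UNIV :: 'w set)" "continuous_on UNIV g"
  obtains \<omega> where "g \<omega> = Sup (range g)"
proof -
  obtain \<omega> where "\<forall>\<omega>'. g \<omega>' \<le> g \<omega>"
    using continuous_attains_sup[OF assms(1) _ assms(2)] by auto
  then have "g \<omega> = Sup (range g)"
    by (intro cSup_eq_maximum[symmetric]) auto
  then show ?thesis by (rule that)
qed

lemma compact_argmax_gap:
  fixes g \<phi> :: "'w::topological_space \<Rightarrow> real"
  assumes W: "compact (UNIV :: 'w set)" and g: "continuous_on UNIV g" and \<phi>: "continuous_on UNIV \<phi>"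
    and max: "\<And>\<omega>. g \<omega> = Sup (range g) \<Longrightarrow> \<phi> \<omega> \<le> M" and "\<epsilon> > 0"
  obtains \<eta> where "\<eta> > 0" "\<And>\<omega>. M + \<epsilon> \<le> \<phi> \<omega> \<Longrightarrow> g \<omega> \<le> Sup (range g) - \<eta>"
proof (cases "{\<omega>. M + \<epsilon> \<le> \<phi> \<omega>} = {}")
  case True
  then show ?thesis using that[of 1] by auto
next
  case False
  have "closed {\<omega>. M + \<epsilon> \<le> \<phi> \<omega>}"
    using \<phi> by (intro closed_Collect_le continuous_on_const)
  then have "compact {\<omega>. M + \<epsilon> \<le> \<phi> \<omega>}"
    using compact_Int_closed[OF W] by fastforce
  then obtain \<omega>1 where \<omega>1: "M + \<epsilon> \<le> \<phi> \<omega>1" "\<And>\<omega>. M + \<epsilon> \<le> \<phi> \<omega> \<Longrightarrow> g \<omega> \<le> g \<omega>1"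
    using continuous_attains_sup[OF _ False continuous_on_subset[OF g]] by auto
  have "g \<omega>1 \<le> Sup (range g)"
    by (rule compact_UNIV_le_Sup[OF W g])
  moreover have "g \<omega>1 \<noteq> Sup (range g)"
    using max[of \<omega>1] \<omega>1(1) \<open>\<epsilon> > 0\<close> by fastforce
  ultimately show ?thesis
    using \<omega>1(2) by (intro that[of "Sup (range g) - g \<omega>1"]) auto
qed

lemma compact_max_perturbation:
  fixes g \<phi> :: "'w::topological_space \<Rightarrow> real"
  assumes W: "compact (UNIV :: 'w set)" and g: "continuous_on UNIV g" and \<phi>: "continuous_on UNIV \<phi>"
    and max: "\<And>\<omega>. g \<omega> = Sup (range g) \<Longrightarrow> \<phi> \<omega> \<le> M" and \<epsilon>: "\<epsilon> > 0"
  obtains \<delta> where "\<delta> > 0"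
    "\<And>t \<omega>. 0 < t \<Longrightarrow> t < \<delta> \<Longrightarrow> g \<omega> + t * \<phi> \<omega> \<le> Sup (range g) + t * (M + \<epsilon>)"
proof -
  obtain \<eta> where \<eta>: "\<eta> > 0" "\<And>\<omega>. M + \<epsilon> \<le> \<phi> \<omega> \<Longrightarrow> g \<omega> \<le> Sup (range g) - \<eta>"
    using compact_argmax_gap[OF W g \<phi> max \<epsilon>] by blast
  obtain \<omega>' where \<omega>': "\<forall>\<omega>. \<phi> \<omega> \<le> \<phi> \<omega>'"
    using continuous_attains_sup[OF W _ \<phi>] by auto
  define B where "B = \<bar>\<phi> \<omega>'\<bar> + \<bar>M + \<epsilon>\<bar> + 1"
  have B: "B > 0" unfolding B_def by simp
  have "g \<omega> + t * \<phi> \<omega> \<le> Sup (range g) + t * (M + \<epsilon>)" if t: "0 < t" "t < \<eta> / B" for t \<omega>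
  proof (cases "M + \<epsilon> \<le> \<phi> \<omega>")
    case True
    have "t * \<phi> \<omega> - t * (M + \<epsilon>) \<le> t * (B - 1)"
      using \<omega>'[rule_format, of \<omega>] t(1) unfolding B_def
      by (simp add: right_diff_distrib[symmetric] mult_left_mono abs_le_iff)
    also have "\<dots> < \<eta>"
      using t B by (simp add: less_divide_eq algebra_simps)
    finally show ?thesis using \<eta>(2)[OF True] by linarith
  next
    case False
    then show ?thesis
      using compact_UNIV_le_Sup[OF W g, of \<omega>] mult_left_mono[of "\<phi> \<omega>" "M + \<epsilon>" t] t(1)
      by linarith
  qed
  then show ?thesis
    using that[of "\<eta> / B"] \<eta>(1) B by simp
qed

lemma has_dir_deriv_add:
  assumes "has_dir_deriv \<phi> x h d" "has_dir_deriv \<psi> x h e"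
  shows "has_dir_deriv (\<lambda>y. \<phi> y + \<psi> y) x h (d + e)"
proof -
  have "(\<lambda>t. (\<phi> (x + t *\<^sub>R h) - \<phi> x) / t + (\<psi> (x + t *\<^sub>R h) - \<psi> x) / t)
      = (\<lambda>t. (\<phi> (x + t *\<^sub>R h) + \<psi> (x + t *\<^sub>R h) - (\<phi> x + \<psi> x)) / t)"
    by (simp only: add_diff_add add_divide_distrib)
  then show ?thesis
    using tendsto_add[OF assms[unfolded has_dir_deriv_def]] unfolding has_dir_deriv_def by simp
qed

lemma has_dir_deriv_unique:
  assumes "has_dir_deriv \<phi> x h d" "has_dir_deriv \<phi> x h e"
  shows "d = e"
  using assms unfolding has_dir_deriv_def by (rule tendsto_unique[OF trivial_limit_at_right_real])

lemma has_derivative_imp_has_dir_deriv: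
  assumes "(\<phi> has_derivative \<phi>') (at x)"
  shows "has_dir_deriv \<phi> x h (\<phi>' h)"
proof -
  have line: "((\<lambda>s. x + s *\<^sub>R h) has_derivative (\<lambda>s. s *\<^sub>R h)) (at 0)"
    by (auto intro!: derivative_eq_intros)
  have "(\<phi> has_derivative \<phi>') (at (x + 0 *\<^sub>R h))"
    using assms by simp
  from has_derivative_compose[OF line this]
  have "((\<lambda>s. \<phi> (x + s *\<^sub>R h)) has_derivative (\<lambda>s. \<phi>' (s *\<^sub>R h))) (at 0)" .
  moreover have "(\<lambda>s. \<phi>' (s *\<^sub>R h)) = (*) (\<phi>' h)"
    using linear_scale[OF has_derivative_linear[OF assms]] by (auto simp: mult.commute)
  ultimately have "((\<lambda>s. \<phi> (x + s *\<^sub>R h)) has_real_derivative \<phi>' h) (at 0)"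
    unfolding has_field_derivative_def by simp
  then have "((\<lambda>s. \<phi> (x + s *\<^sub>R h)) has_real_derivative \<phi>' h) (at 0 within {0<..})"
    by (rule has_field_derivative_at_within)
  then show ?thesis
    unfolding has_field_derivative_iff has_dir_deriv_def by simp
qed

locale max_function =
  fixes f :: "'a::euclidean_space \<Rightarrow> 'w::topological_space \<Rightarrow> real" and gf :: "'a \<Rightarrow> 'w \<Rightarrow> 'a"
  assumes compact_params: "compact (UNIV :: 'w set)"
    and f_diff: "\<And>x \<omega>. ((\<lambda>y. f y \<omega>) has_derivative (\<lambda>h. gf x \<omega> \<bullet> h)) (at x)"
    and f_cont: "continuous_on UNIV (\<lambda>p. f (fst p) (snd p))"
    and gf_cont: "continuous_on UNIV (\<lambda>p. gf (fst p) (snd p))"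
begin

lemma continuous_on_f: "continuous_on UNIV (f y)"
  using continuous_on_compose2[OF f_cont, of UNIV "\<lambda>\<omega>. (y, \<omega>)"] by (simp add: continuous_on_Pair)

lemma continuous_on_gf: "continuous_on UNIV (gf y)"
  using continuous_on_compose2[OF gf_cont, of UNIV "\<lambda>\<omega>. (y, \<omega>)"] by (simp add: continuous_on_Pair)

lemma le_maxfun: "f y \<omega> \<le> maxfun f y"
  unfolding maxfun_def by (rule compact_UNIV_le_Sup[OF compact_params continuous_on_f])

lemma active_set_nonempty: "active_set f y \<noteq> {}"
  using compact_UNIV_Sup_attained[OF compact_params continuous_on_f]
  unfolding active_set_def maxfun_def by blast

lemma compact_active_set: "compact (active_set f y)"
proof -
  have "closed (active_set f y)"
    unfolding active_set_def
    using continuous_closed_preimage_constant[OF continuous_on_f closed_UNIV] by simp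
  then show ?thesis using compact_Int_closed[OF compact_params] by simp
qed

lemma active_inner_attains_Sup:
  obtains \<omega> where "\<omega> \<in> active_set f x" "gf x \<omega> \<bullet> h = (SUP \<omega>\<in>active_set f x. gf x \<omega> \<bullet> h)"
    "\<And>\<omega>'. \<omega>' \<in> active_set f x \<Longrightarrow> gf x \<omega>' \<bullet> h \<le> gf x \<omega> \<bullet> h"
proof -
  have "continuous_on (active_set f x) (\<lambda>\<omega>. gf x \<omega> \<bullet> h)"
    using continuous_on_gf by (intro continuous_intros) (auto intro: continuous_on_subset)
  then obtain \<omega> where "\<omega> \<in> active_set f x" "\<forall>\<omega>'\<in>active_set f x. gf x \<omega>' \<bullet> h \<le> gf x \<omega> \<bullet> h"
    using continuous_attains_sup[OF compact_active_set active_set_nonempty] by blast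
  moreover from this have "gf x \<omega> \<bullet> h = (SUP \<omega>\<in>active_set f x. gf x \<omega> \<bullet> h)"
    by (intro cSup_eq_maximum[symmetric]) auto
  ultimately show ?thesis using that by blast
qed

lemma line_has_derivative:
  "((\<lambda>s. f (x + s *\<^sub>R h) \<omega>) has_real_derivative (gf (x + s *\<^sub>R h) \<omega> \<bullet> h)) (at s)"
proof -
  have "((\<lambda>s. x + s *\<^sub>R h) has_derivative (\<lambda>s. s *\<^sub>R h)) (at s)"
    by (auto intro!: derivative_eq_intros)
  from has_derivative_compose[OF this f_diff]
  have "((\<lambda>s. f (x + s *\<^sub>R h) \<omega>) has_derivative (\<lambda>t. t * (gf (x + s *\<^sub>R h) \<omega> \<bullet> h))) (at s)"
    by simp
  moreover have "(\<lambda>t. t * (gf (x + s *\<^sub>R h) \<omega> \<bullet> h)) = (*) (gf (x + s *\<^sub>R h) \<omega> \<bullet> h)"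
    by (auto simp: mult.commute)
  ultimately show ?thesis
    unfolding has_field_derivative_def by simp
qed

lemma line_upper_bound:
  assumes "\<epsilon> > 0"
  obtains \<delta> where "\<delta> > 0"
    "\<And>t \<omega>. 0 < t \<Longrightarrow> t < \<delta> \<Longrightarrow> f (x + t *\<^sub>R h) \<omega> \<le> f x \<omega> + t * (gf x \<omega> \<bullet> h + \<epsilon>)"
proof -
  define c where "c = norm h + 1"
  have c: "c > 0" "norm h \<le> c" unfolding c_def by (simp_all add: add_nonneg_pos)
  obtain d where d: "d > 0" "\<And>y \<omega>. dist y x < d \<Longrightarrow> dist (gf y \<omega>) (gf x \<omega>) < \<epsilon> / c"
    using compact_param_equicontinuous_at[OF compact_params gf_cont, of "\<epsilon> / c" x] assms c by auto
  have "f (x + t *\<^sub>R h) \<omega> \<le> f x \<omega> + t * (gf x \<omega> \<bullet> h + \<epsilon>)" if t: "0 < t" "t < d / c" for t \<omega>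
  proof -
    obtain z where z: "0 < z" "z < t"
      "f (x + t *\<^sub>R h) \<omega> - f (x + 0 *\<^sub>R h) \<omega> = (t - 0) * (gf (x + z *\<^sub>R h) \<omega> \<bullet> h)"
      using MVT2[OF t(1), of "\<lambda>s. f (x + s *\<^sub>R h) \<omega>" "\<lambda>s. gf (x + s *\<^sub>R h) \<omega> \<bullet> h"]
        line_has_derivative by blast
    have "dist (x + z *\<^sub>R h) x = z * norm h" using z by (simp add: dist_norm)
    also have "\<dots> \<le> t * c" using z c by (intro mult_mono) auto
    also have "\<dots> < d" using t c by (simp add: less_divide_eq)
    finally have "dist (gf (x + z *\<^sub>R h) \<omega>) (gf x \<omega>) < \<epsilon> / c"
      by (rule d(2))
    then have "norm (gf (x + z *\<^sub>R h) \<omega> - gf x \<omega>) * norm h \<le> \<epsilon> / c * c"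
      using c assms by (intro mult_mono) (auto simp: dist_norm)
    then have "(gf (x + z *\<^sub>R h) \<omega> - gf x \<omega>) \<bullet> h \<le> \<epsilon>"
      using norm_cauchy_schwarz[of "gf (x + z *\<^sub>R h) \<omega> - gf x \<omega>" h] c by simp
    then have "t * (gf (x + z *\<^sub>R h) \<omega> \<bullet> h) \<le> t * (gf x \<omega> \<bullet> h + \<epsilon>)"
      using t(1) by (intro mult_left_mono) (auto simp: inner_diff_left)
    then show ?thesis using z(3) by simp
  qed
  then show ?thesis
    using that[of "d / c"] d(1) c(1) by simp
qed

lemma maxfun_quotient_eventually_gt:
  assumes "a < (SUP \<omega>\<in>active_set f x. gf x \<omega> \<bullet> h)"
  shows "\<forall>\<^sub>F t in at_right 0. a < (maxfun f (x + t *\<^sub>R h) - maxfun f x) / t"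
proof -
  obtain \<omega>0 where \<omega>0: "\<omega>0 \<in> active_set f x" "gf x \<omega>0 \<bullet> h = (SUP \<omega>\<in>active_set f x. gf x \<omega> \<bullet> h)"
    by (rule active_inner_attains_Sup[where x=x and h=h]) blast
  have "((\<lambda>s. f (x + s *\<^sub>R h) \<omega>0) has_real_derivative gf x \<omega>0 \<bullet> h) (at 0 within {0<..})"
    using line_has_derivative[where x=x and s=0 and h=h and \<omega>=\<omega>0]
    by (simp add: has_field_derivative_at_within)
  then have "((\<lambda>t. (f (x + t *\<^sub>R h) \<omega>0 - f x \<omega>0) / t) \<longlongrightarrow> gf x \<omega>0 \<bullet> h) (at_right 0)"
    unfolding has_field_derivative_iff by simp
  then have "\<forall>\<^sub>F t in at_right 0. a < (f (x + t *\<^sub>R h) \<omega>0 - f x \<omega>0) / t"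
    using assms \<omega>0(2) by (intro order_tendstoD) auto
  moreover have "\<forall>\<^sub>F t in at_right 0.
      (f (x + t *\<^sub>R h) \<omega>0 - f x \<omega>0) / t \<le> (maxfun f (x + t *\<^sub>R h) - maxfun f x) / t"
    using eventually_at_right_less[of 0]
  proof eventually_elim
    case (elim t)
    then show ?case
      using \<omega>0(1) le_maxfun[of "x + t *\<^sub>R h" \<omega>0] unfolding active_set_def
      by (simp add: divide_right_mono)
  qed
  ultimately show ?thesis
    by eventually_elim (rule less_le_trans)
qed

text \<open>The upper bound combines the mean value theorem, made uniform in the parameter by
  equicontinuity of the gradients, with the gap that parameters whose slope exceeds the
  directional derivative keep below the maximum.\<close>
lemma maxfun_quotient_eventually_lt:
  assumes "(SUP \<omega>\<in>active_set f x. gf x \<omega> \<bullet> h) < a"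
  shows "\<forall>\<^sub>F t in at_right 0. (maxfun f (x + t *\<^sub>R h) - maxfun f x) / t < a"
proof -
  define M where "M = (SUP \<omega>\<in>active_set f x. gf x \<omega> \<bullet> h)"
  define \<epsilon> where "\<epsilon> = (a - M) / 3"
  have \<epsilon>: "\<epsilon> > 0" using assms unfolding \<epsilon>_def M_def by simp
  obtain \<delta>1 where \<delta>1: "\<delta>1 > 0"
    "\<And>t \<omega>. 0 < t \<Longrightarrow> t < \<delta>1 \<Longrightarrow> f (x + t *\<^sub>R h) \<omega> \<le> f x \<omega> + t * (gf x \<omega> \<bullet> h + \<epsilon>)"
    using line_upper_bound[OF \<epsilon>] by blast
  obtain \<omega>0 where "gf x \<omega>0 \<bullet> h = M"
    "\<And>\<omega>. \<omega> \<in> active_set f x \<Longrightarrow> gf x \<omega> \<bullet> h \<le> gf x \<omega>0 \<bullet> h"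
    unfolding M_def by (rule active_inner_attains_Sup[where x=x and h=h]) blast
  then have "gf x \<omega> \<bullet> h \<le> M" if "f x \<omega> = Sup (range (f x))" for \<omega>
    using that unfolding active_set_def maxfun_def by fastforce
  moreover have "continuous_on UNIV (\<lambda>\<omega>. gf x \<omega> \<bullet> h)"
    using continuous_on_gf by (intro continuous_intros)
  ultimately obtain \<delta>2 where \<delta>2: "\<delta>2 > 0"
    "\<And>t \<omega>. 0 < t \<Longrightarrow> t < \<delta>2 \<Longrightarrow> f x \<omega> + t * (gf x \<omega> \<bullet> h) \<le> maxfun f x + t * (M + \<epsilon>)"
    unfolding maxfun_def using compact_max_perturbation[OF compact_params continuous_on_f _ _ \<epsilon>]
    by blast
  have "(maxfun f (x + t *\<^sub>R h) - maxfun f x) / t < a" if t: "0 < t" "t < min \<delta>1 \<delta>2" for t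
  proof -
    obtain \<omega> where "\<omega> \<in> active_set f (x + t *\<^sub>R h)"
      using active_set_nonempty by blast
    then have "maxfun f (x + t *\<^sub>R h) = f (x + t *\<^sub>R h) \<omega>"
      unfolding active_set_def by simp
    also have "\<dots> \<le> maxfun f x + t * (M + 2 * \<epsilon>)"
      using \<delta>1(2)[of t \<omega>] \<delta>2(2)[of t \<omega>] t by (simp add: algebra_simps)
    finally have "(maxfun f (x + t *\<^sub>R h) - maxfun f x) / t \<le> M + 2 * \<epsilon>"
      using t(1) by (simp add: divide_le_eq algebra_simps)
    moreover have "M + 2 * \<epsilon> < a"
      using assms unfolding \<epsilon>_def M_def by (simp add: field_simps)
    ultimately show ?thesis by linarith
  qed
  then show ?thesis
    unfolding eventually_at_right_field using \<delta>1(1) \<delta>2(1)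
    by (intro exI[of _ "min \<delta>1 \<delta>2"]) auto
qed

theorem maxfun_has_dir_deriv:
  "has_dir_deriv (maxfun f) x h (SUP \<omega>\<in>active_set f x. gf x \<omega> \<bullet> h)"
  unfolding has_dir_deriv_def
  by (rule order_tendstoI)
    (simp_all add: maxfun_quotient_eventually_gt maxfun_quotient_eventually_lt)

end

section \<open>The set D(x)\<close>

lemma convex_sums3:
  assumes "convex U" "convex V" "convex W"
  shows "convex {u + v + w | u v w. u \<in> U \<and> v \<in> V \<and> w \<in> W}"
proof -
  have eq: "{u + v + w | u v w. u \<in> U \<and> v \<in> V \<and> w \<in> W}
      = (\<Union>s\<in>(\<Union>u\<in>U. \<Union>v\<in>V. {u + v}). \<Union>w\<in>W. {s + w})"
    by blast
  show ?thesis unfolding eq by (intro convex_sums assms)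
qed

lemma mem_Dset:
  "d \<in> Dset f gf G DG K A x \<longleftrightarrow> (\<exists>u l w. d = u + adj (DG x) l + w \<and> u \<in> subdiff f gf x
     \<and> l \<in> polar_cone K \<and> l (G x) = 0 \<and> w \<in> normal_cone A x)"
  unfolding Dset_def constr_cone_def by blast

lemma convex_constr_cone:
  assumes "linear (DG x)"
  shows "convex (constr_cone G DG K x)"
proof -
  have "convex {l. l \<in> polar_cone K \<and> l (G x) = 0}"
    unfolding polar_cone_def
    by (rule convexI)
      (auto simp: blinfun.add_left blinfun.scaleR_left add_nonpos_nonpos mult_nonneg_nonpos)
  moreover have "constr_cone G DG K x = adj (DG x) ` {l. l \<in> polar_cone K \<and> l (G x) = 0}"
    unfolding constr_cone_def by blast
  ultimately show ?thesis
    using convex_linear_image[OF linear_adj[OF assms]] by simp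
qed

lemma convex_Dset:
  assumes "linear (DG x)"
  shows "convex (Dset f gf G DG K A x)"
  unfolding Dset_def
  using convex_constr_cone[where G=G and K=K and DG=DG and x=x, OF assms] convex_cone_normal_cone
  by (intro convex_sums3) (auto simp: subdiff_def convex_cone_def)

context max_function
begin

lemma gf_mem_subdiff: "\<omega> \<in> active_set f x \<Longrightarrow> gf x \<omega> \<in> subdiff f gf x"
  unfolding subdiff_def by (rule hull_inc) blast

lemma subdiff_inner_le:
  assumes "u \<in> subdiff f gf x"
  shows "u \<bullet> h \<le> (SUP \<omega>\<in>active_set f x. gf x \<omega> \<bullet> h)"
proof -
  obtain \<omega>0 where "gf x \<omega>0 \<bullet> h = (SUP \<omega>\<in>active_set f x. gf x \<omega> \<bullet> h)"
    "\<And>\<omega>. \<omega> \<in> active_set f x \<Longrightarrow> gf x \<omega> \<bullet> h \<le> gf x \<omega>0 \<bullet> h"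
    by (rule active_inner_attains_Sup[where x=x and h=h]) blast
  then have "{gf x \<omega> |\<omega>. \<omega> \<in> active_set f x} \<subseteq> {u. h \<bullet> u \<le> (SUP \<omega>\<in>active_set f x. gf x \<omega> \<bullet> h)}"
    by (auto simp: inner_commute)
  then have "subdiff f gf x \<subseteq> {u. h \<bullet> u \<le> (SUP \<omega>\<in>active_set f x. gf x \<omega> \<bullet> h)}"
    unfolding subdiff_def by (intro hull_minimal convex_halfspace_le)
  then show ?thesis using assms by (auto simp: inner_commute)
qed

lemma compact_subdiff: "compact (subdiff f gf x)"
proof -
  have "compact (gf x ` active_set f x)"
    using continuous_on_subset[OF continuous_on_gf]
    by (intro compact_continuous_image compact_active_set) auto
  moreover have "{gf x \<omega> |\<omega>. \<omega> \<in> active_set f x} = gf x ` active_set f x" by auto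
  ultimately show ?thesis unfolding subdiff_def by (simp add: compact_convex_hull)
qed

lemma lagrangian_has_dir_deriv:
  assumes "(G has_derivative T) (at x)"
  shows "has_dir_deriv (lagrangian f G l) x h ((SUP \<omega>\<in>active_set f x. gf x \<omega> \<bullet> h) + l (T h))"
proof -
  have "((\<lambda>y. l (G y)) has_derivative (\<lambda>h. l (T h))) (at x)"
    using bounded_linear.has_derivative[OF blinfun.bounded_linear_right assms] .
  from has_dir_deriv_add[OF maxfun_has_dir_deriv has_derivative_imp_has_dir_deriv[OF this]]
  show ?thesis unfolding lagrangian_def[abs_def] by simp
qed

lemma is_lagrange_multiplier_iff:
  assumes "(G has_derivative T) (at x)"
  shows "is_lagrange_multiplier f G K A x l \<longleftrightarrow> l \<in> polar_cone K \<and> l (G x) = 0 \<and>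
    (\<forall>h\<in>contingent_cone A x. 0 \<le> (SUP \<omega>\<in>active_set f x. gf x \<omega> \<bullet> h) + l (T h))"
proof -
  have "(\<exists>d. has_dir_deriv (lagrangian f G l) x h d \<and> 0 \<le> d)
      \<longleftrightarrow> 0 \<le> (SUP \<omega>\<in>active_set f x. gf x \<omega> \<bullet> h) + l (T h)" for h
    using lagrangian_has_dir_deriv[OF assms] has_dir_deriv_unique by blast
  then show ?thesis unfolding is_lagrange_multiplier_def by simp
qed

lemma Dset_memI:
  assumes "\<omega> \<in> active_set f x" "l \<in> polar_cone K" "l (G x) = 0" "w \<in> normal_cone A x"
  shows "gf x \<omega> + adj (DG x) l + w \<in> Dset f gf G DG K A x"
  unfolding mem_Dset using assms gf_mem_subdiff by blast

lemma inner_Dset_le: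
  assumes T: "linear T" and "u \<in> subdiff f gf x" "w \<in> normal_cone A x"
    and "h \<in> contingent_cone A x"
  shows "(u + adj T l + w) \<bullet> h \<le> (SUP \<omega>\<in>active_set f x. gf x \<omega> \<bullet> h) + l (T h)"
proof -
  have "w \<bullet> h \<le> 0"
    using assms(3,4) unfolding normal_cone_def by blast
  then show ?thesis
    using subdiff_inner_le[OF assms(2), of h] by (simp add: inner_add_left inner_adj[OF T])
qed

lemma zero_mem_DsetI:
  assumes A: "convex A" "x \<in> A" and T: "linear (DG x)"
    and l: "l \<in> polar_cone K" "l (G x) = 0"
    and nonneg: "\<And>h. h \<in> contingent_cone A x \<Longrightarrow> 0 \<le> (SUP \<omega>\<in>active_set f x. gf x \<omega> \<bullet> h) + l (DG x h)"
  shows "0 \<in> Dset f gf G DG K A x"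
proof -
  let ?C = "(\<lambda>u. adj (DG x) l + u) ` subdiff f gf x"
  have "\<exists>u\<in>?C. 0 \<le> u \<bullet> h" if "\<forall>w\<in>normal_cone A x. w \<bullet> h \<le> 0" for h
  proof -
    obtain \<omega> where \<omega>: "\<omega> \<in> active_set f x" "gf x \<omega> \<bullet> h = (SUP \<omega>\<in>active_set f x. gf x \<omega> \<bullet> h)"
      by (rule active_inner_attains_Sup[where x=x and h=h]) blast
    have "h \<in> contingent_cone A x"
      using that mem_contingent_cone_iff_normal_cone[OF A] by blast
    then have "0 \<le> (adj (DG x) l + gf x \<omega>) \<bullet> h"
      using nonneg[of h] \<omega>(2) by (simp add: inner_add_left inner_adj[OF T])
    moreover have "adj (DG x) l + gf x \<omega> \<in> ?C"
      using gf_mem_subdiff[OF \<omega>(1)] by blast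
    ultimately show ?thesis by blast
  qed
  moreover have "compact ?C" "convex ?C"
    using compact_subdiff by (auto intro: compact_translation convex_translation simp: subdiff_def)
  ultimately obtain u w where "u \<in> subdiff f gf x" "w \<in> normal_cone A x" "adj (DG x) l + u + w = 0"
    using zero_mem_compact_plus_convex_cone[OF _ _ closed_normal_cone convex_cone_normal_cone]
    by blast
  then show ?thesis
    unfolding mem_Dset using l by (metis add.commute)
qed

lemma zero_mem_Dset_iff:
  assumes A: "convex A" "x \<in> A" and T: "linear (DG x)"
  shows "0 \<in> Dset f gf G DG K A x \<longleftrightarrow> (\<exists>l\<in>polar_cone K. l (G x) = 0 \<and>
    (\<forall>h\<in>contingent_cone A x. 0 \<le> (SUP \<omega>\<in>active_set f x. gf x \<omega> \<bullet> h) + l (DG x h)))"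
proof
  assume "0 \<in> Dset f gf G DG K A x"
  then obtain u l w where uw: "0 = u + adj (DG x) l + w" "u \<in> subdiff f gf x"
    "l \<in> polar_cone K" "l (G x) = 0" "w \<in> normal_cone A x"
    unfolding mem_Dset by blast
  then show "\<exists>l\<in>polar_cone K. l (G x) = 0 \<and>
      (\<forall>h\<in>contingent_cone A x. 0 \<le> (SUP \<omega>\<in>active_set f x. gf x \<omega> \<bullet> h) + l (DG x h))"
  proof (intro bexI conjI ballI)
    fix h assume "h \<in> contingent_cone A x"
    then show "0 \<le> (SUP \<omega>\<in>active_set f x. gf x \<omega> \<bullet> h) + l (DG x h)"
      using inner_Dset_le[OF T uw(2,5), of h l] by (simp flip: uw(1))
  qed (use uw(3,4) in auto)
qed (use zero_mem_DsetI[where DG=DG and x=x, OF A T] in blast)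

lemma Dset_inner_le_if_tangent:
  assumes T: "linear (DG x)" and d: "d \<in> Dset f gf G DG K A x"
    and h: "h \<in> contingent_cone A x" "DG x h \<in> contingent_cone K (G x)"
  shows "d \<bullet> h \<le> (SUP \<omega>\<in>active_set f x. gf x \<omega> \<bullet> h)"
proof -
  obtain u l w where uw: "d = u + adj (DG x) l + w" "u \<in> subdiff f gf x"
    "l \<in> polar_cone K" "l (G x) = 0" "w \<in> normal_cone A x"
    using d unfolding mem_Dset by blast
  have "l (DG x h) \<le> 0"
    using polar_cone_nonpos_on_contingent_cone[OF uw(3,4) h(2)] .
  then show ?thesis
    using inner_Dset_le[OF T uw(2,5) h(1), of l] unfolding uw(1) by linarith
qed

lemma exists_Dset_inner_pos_if_unbounded:
  assumes T: "linear (DG x)" and l: "l \<in> polar_cone K" "l (G x) = 0"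
    and w: "w \<in> normal_cone A x" and pos: "0 < l (DG x h) + w \<bullet> h"
  shows "\<exists>d\<in>Dset f gf G DG K A x. 0 < d \<bullet> h"
proof -
  obtain \<omega> where \<omega>: "\<omega> \<in> active_set f x"
    using active_set_nonempty by blast
  obtain t where t: "t > 0" "0 < gf x \<omega> \<bullet> h + t * (l (DG x h) + w \<bullet> h)"
    using exists_pos_scale_gt[OF pos] by blast
  have "t *\<^sub>R l \<in> polar_cone K" "(t *\<^sub>R l) (G x) = 0"
    using l t(1) unfolding polar_cone_def by (auto simp: blinfun.scaleR_left mult_nonneg_nonpos)
  moreover have "t *\<^sub>R w \<in> normal_cone A x"
    using convex_cone_scaleR[OF convex_cone_normal_cone _ w] t(1) by simp
  ultimately have "gf x \<omega> + adj (DG x) (t *\<^sub>R l) + t *\<^sub>R w \<in> Dset f gf G DG K A x"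
    by (rule Dset_memI[OF \<omega>])
  moreover have "(gf x \<omega> + adj (DG x) (t *\<^sub>R l) + t *\<^sub>R w) \<bullet> h
      = gf x \<omega> \<bullet> h + t * (l (DG x h) + w \<bullet> h)"
    by (simp add: inner_add_left inner_adj[OF T] blinfun.scaleR_left distrib_left)
  ultimately show ?thesis using t(2) by metis
qed

lemma exists_Dset_inner_pos_iff:
  assumes A: "convex A" "x \<in> A" and K: "convex K" "cone K" "G x \<in> K" and T: "linear (DG x)"
  shows "(\<exists>d\<in>Dset f gf G DG K A x. 0 < d \<bullet> h) \<longleftrightarrow>
    (h \<in> contingent_cone A x \<and> DG x h \<in> contingent_cone K (G x)
      \<longrightarrow> 0 < (SUP \<omega>\<in>active_set f x. gf x \<omega> \<bullet> h))"
proof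
  assume "\<exists>d\<in>Dset f gf G DG K A x. 0 < d \<bullet> h"
  then show "h \<in> contingent_cone A x \<and> DG x h \<in> contingent_cone K (G x)
      \<longrightarrow> 0 < (SUP \<omega>\<in>active_set f x. gf x \<omega> \<bullet> h)"
    using Dset_inner_le_if_tangent[where DG=DG and G=G and x=x, OF T] by fastforce
next
  have polar0: "0 \<in> polar_cone K" and normal0: "0 \<in> normal_cone A x"
    unfolding polar_cone_def normal_cone_def by simp_all
  assume "h \<in> contingent_cone A x \<and> DG x h \<in> contingent_cone K (G x)
      \<longrightarrow> 0 < (SUP \<omega>\<in>active_set f x. gf x \<omega> \<bullet> h)"
  then consider "h \<notin> contingent_cone A x" | "DG x h \<notin> contingent_cone K (G x)"
    | "0 < (SUP \<omega>\<in>active_set f x. gf x \<omega> \<bullet> h)"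
    by blast
  then show "\<exists>d\<in>Dset f gf G DG K A x. 0 < d \<bullet> h"
  proof cases
    case 1
    then obtain w where "w \<in> normal_cone A x" "0 < w \<bullet> h"
      using mem_contingent_cone_iff_normal_cone[OF A] by (auto simp: not_le)
    then show ?thesis
      using exists_Dset_inner_pos_if_unbounded[where DG=DG and G=G and x=x, OF T polar0] by simp
  next
    case 2
    then obtain l where "l \<in> polar_cone K" "l (G x) = 0" "0 < l (DG x h)"
      using mem_contingent_cone_iff_polar[OF K] by (auto simp: not_le)
    then show ?thesis
      using exists_Dset_inner_pos_if_unbounded[where DG=DG and G=G and x=x, OF T _ _ normal0]
      by simp
  next
    case 3
    obtain \<omega> where "\<omega> \<in> active_set f x" "gf x \<omega> \<bullet> h = (SUP \<omega>\<in>active_set f x. gf x \<omega> \<bullet> h)"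
      by (rule active_inner_attains_Sup[where x=x and h=h]) blast
    with Dset_memI[OF _ polar0 _ normal0] 3 show ?thesis
      by (intro bexI) (auto simp: linear_0[OF linear_adj[OF T]])
  qed
qed

end

theorem theorem4:
  fixes A :: "'a::euclidean_space set"
    and K :: "'b::banach set"
    and f :: "'a \<Rightarrow> 'w::t2_space \<Rightarrow> real"
    and gf :: "'a \<Rightarrow> 'w \<Rightarrow> 'a"
    and G :: "'a \<Rightarrow> 'b"
    and DG :: "'a \<Rightarrow> ('a \<Rightarrow>\<^sub>L 'b)"
    and x :: 'a
  assumes A: "A \<noteq> {}" "closed A" "convex A"
    and K: "K \<noteq> {}" "closed K" "convex K" "cone K"
    and W: "compact (UNIV :: 'w set)"
    and f_diff: "\<And>x \<omega>. ((\<lambda>y. f y \<omega>) has_derivative (\<lambda>h. gf x \<omega> \<bullet> h)) (at x)"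
    and f_cont: "continuous_on UNIV (\<lambda>p. f (fst p) (snd p))"
    and gf_cont: "continuous_on UNIV (\<lambda>p. gf (fst p) (snd p))"
    and G_diff: "\<And>x. (G has_derivative blinfun_apply (DG x)) (at x)"
    and DG_cont: "continuous_on UNIV DG"
    and feas: "G x \<in> K" "x \<in> A"
  shows "((\<exists>l. is_lagrange_multiplier f G K A x l)
            \<longleftrightarrow> 0 \<in> Dset f gf G (\<lambda>y. blinfun_apply (DG y)) K A x)
       \<and> ((\<forall>h. h \<in> contingent_cone A x - {0}
               \<and> blinfun_apply (DG x) h \<in> contingent_cone K (G x)
               \<longrightarrow> (SUP \<omega>\<in>active_set f x. gf x \<omega> \<bullet> h) > 0)
            \<longleftrightarrow> 0 \<in> interior (Dset f gf G (\<lambda>y. blinfun_apply (DG y)) K A x))"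
proof -
  interpret max_function f gf
    using W f_diff f_cont gf_cont by unfold_locales
  \<comment> \<open>Unused: closedness and nonemptiness of A and K, continuity of DG. Only the closures
    of the cones generated by A and K at the base points and the derivative at x enter.\<close>
  let ?DG = "\<lambda>y. blinfun_apply (DG y)"
  let ?D = "Dset f gf G ?DG K A x"
  have T: "linear (?DG x)"
    by (rule bounded_linear.linear[OF blinfun.bounded_linear_right])
  have "(\<exists>l. is_lagrange_multiplier f G K A x l) \<longleftrightarrow> 0 \<in> ?D"
    unfolding is_lagrange_multiplier_iff[OF G_diff]
      zero_mem_Dset_iff[where DG="?DG", OF A(3) feas(2) T]
    by blast
  moreover have "(\<forall>h. h \<in> contingent_cone A x - {0} \<and> ?DG x h \<in> contingent_cone K (G x)
      \<longrightarrow> (SUP \<omega>\<in>active_set f x. gf x \<omega> \<bullet> h) > 0) \<longleftrightarrow> 0 \<in> interior ?D"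
    unfolding zero_mem_interior_convex_iff[OF convex_Dset[where DG="?DG", OF T]]
      exists_Dset_inner_pos_iff[where DG="?DG" and G=G and x=x, OF A(3) feas(2) K(3,4) feas(1) T]
    by blast
  ultimately show ?thesis
    by blast
qed

end
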